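(* For every integers $d \geq 2$ and $s,t \geq 1$, $$\tfrac{s}{s+t}\mathsf {Brac}_{d,s}+\tfrac{t}{s+t}\mathsf {Brac}_{d,t}\subseteq \mathsf {Brac}_{d,s+t},$$ i.e. if $(\alpha,\beta)\in\mathsf{Brac}_{d,s}$ and $(\mu,\nu)\in\mathsf{Brac}_{d,t}$ then $\big(\tfrac{s\alpha+t\mu}{s+t},\tfrac{s\beta+t\nu}{s+t}\big)\in\mathsf{Brac}_{d,s+t}$.
   Context: $\Delta_d=\{\alpha\in\mathbb R^d:\alpha_i\ge0,\ \sum_i\alpha_i=1\}$. For $s\ge1$, $\mathsf{Brac}_{d,s}$ is the set of $(\alpha,\beta)\in\Delta_d^2$ for which there exist $A_1,\dots,A_d,B_1,\dots,B_d\in M_s(\mathbb C)$ with $\sum_i A_iA_i^*=\sum_iB_iB_i^*=I_s$, $\sum_iA_iB_i^*=0$, and $\tfrac1s\|A_i\|_F^2=\alpha_i$, $\tfrac1s\|B_i\|_F^2=\beta_i$ for all $i\in[d]$, where $\|X\|_F=\operatorname{Tr}(XX^* )^{1/2}$. *)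

theory Defs
  imports Complex_Main
begin

text \<open>An s x s complex matrix is represented by a function M :: nat => nat => complex,
  of which only the entries M j k with j, k < s are relevant. Vectors in R^d are
  functions nat => real with coordinates 0..d-1 (index set [d] = {0..<d}).\<close>

definition simplex :: "nat \<Rightarrow> (nat \<Rightarrow> real) set" where
  "simplex d = {a. (\<forall>i<d. a i \<ge> 0) \<and> (\<Sum>i<d. a i) = 1 \<and> (\<forall>i\<ge>d. a i = 0)}"

definition mult_adj :: "nat \<Rightarrow> (nat \<Rightarrow> nat \<Rightarrow> complex) \<Rightarrow> (nat \<Rightarrow> nat \<Rightarrow> complex) \<Rightarrow> nat \<Rightarrow> nat \<Rightarrow> complex" where
  "mult_adj s X Y j k = (\<Sum>l<s. X j l * cnj (Y k l))"

definition frob_sq :: "nat \<Rightarrow> (nat \<Rightarrow> nat \<Rightarrow> complex) \<Rightarrow> real" where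
  "frob_sq s X = (\<Sum>j<s. \<Sum>l<s. (cmod (X j l))^2)"

definition Brac :: "nat \<Rightarrow> nat \<Rightarrow> ((nat \<Rightarrow> real) \<times> (nat \<Rightarrow> real)) set" where
  "Brac d s = {(a, b). a \<in> simplex d \<and> b \<in> simplex d \<and>
     (\<exists>A B :: nat \<Rightarrow> nat \<Rightarrow> nat \<Rightarrow> complex.
        (\<forall>j<s. \<forall>k<s. (\<Sum>i<d. mult_adj s (A i) (A i) j k) = (if j = k then 1 else 0)) \<and>
        (\<forall>j<s. \<forall>k<s. (\<Sum>i<d. mult_adj s (B i) (B i) j k) = (if j = k then 1 else 0)) \<and>
        (\<forall>j<s. \<forall>k<s. (\<Sum>i<d. mult_adj s (A i) (B i) j k) = 0) \<and>
        (\<forall>i<d. frob_sq s (A i) / real s = a i \<and> frob_sq s (B i) / real s = b i))}"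

end

theory Submission
  imports Defs
begin

text \<open>If \<open>(A, B)\<close> witnesses \<open>(\<alpha>, \<beta>) \<in> Brac d s\<close> and \<open>(C, D)\<close> witnesses
  \<open>(\<mu>, \<nu>) \<in> Brac d t\<close>, then the block-diagonal matrices \<open>A\<^sub>i \<oplus> C\<^sub>i\<close> and \<open>B\<^sub>i \<oplus> D\<^sub>i\<close>
  of size \<open>s + t\<close> witness the weighted mean: every product \<open>\<Sum>\<^sub>i X\<^sub>i Y\<^sub>i\<^sup>*\<close> of block-diagonal
  tuples is the block-diagonal matrix of the products of the blocks, and squared
  Frobenius norms add over the blocks.\<close>

type_synonym cmat = "nat \<Rightarrow> nat \<Rightarrow> complex"

lemma sum_lessThan_add: "(\<Sum>l<m + n. f l) = (\<Sum>l<m. f l) + (\<Sum>l<n. f (m + l))" for m n :: nat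
  by (induction n) (auto simp: add.assoc)

definition block_diag :: "nat \<Rightarrow> cmat \<Rightarrow> cmat \<Rightarrow> cmat" where
  "block_diag s X Y j k =
     (if j < s then (if k < s then X j k else 0) else (if k < s then 0 else Y (j - s) (k - s)))"

definition id_mat :: cmat where
  "id_mat j k = (if j = k then 1 else 0)"

lemma block_diag_id_mat: "block_diag s id_mat id_mat = id_mat"
  by (auto simp: fun_eq_iff block_diag_def id_mat_def)

lemma block_diag_zero: "block_diag s (\<lambda>_ _. 0) (\<lambda>_ _. 0) = (\<lambda>_ _. 0)"
  by (auto simp: fun_eq_iff block_diag_def)

lemma mult_adj_block_diag:
  "mult_adj (s + t) (block_diag s X Y) (block_diag s X' Y') =
     block_diag s (mult_adj s X X') (mult_adj t Y Y')"
  by (auto simp: fun_eq_iff mult_adj_def block_diag_def sum_lessThan_add)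

lemma frob_sq_block_diag: "frob_sq (s + t) (block_diag s X Y) = frob_sq s X + frob_sq t Y"
  by (simp add: frob_sq_def block_diag_def sum_lessThan_add)

definition gram :: "nat \<Rightarrow> nat \<Rightarrow> (nat \<Rightarrow> cmat) \<Rightarrow> (nat \<Rightarrow> cmat) \<Rightarrow> cmat" where
  "gram d s A B j k = (\<Sum>i<d. mult_adj s (A i) (B i) j k)"

lemma gram_block_diag:
  "gram d (s + t) (\<lambda>i. block_diag s (A i) (C i)) (\<lambda>i. block_diag s (B i) (D i)) =
     block_diag s (gram d s A B) (gram d t C D)"
  by (auto simp: fun_eq_iff gram_def mult_adj_block_diag block_diag_def)

definition eq_on_square :: "nat \<Rightarrow> cmat \<Rightarrow> cmat \<Rightarrow> bool" where
  "eq_on_square n X Y \<longleftrightarrow> (\<forall>j<n. \<forall>k<n. X j k = Y j k)"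

lemma eq_on_square_block_diag:
  assumes "eq_on_square s X X'" and "eq_on_square t Y Y'"
  shows "eq_on_square (s + t) (block_diag s X Y) (block_diag s X' Y')"
  using assms by (auto simp: eq_on_square_def block_diag_def)

definition bracket_pair :: "nat \<Rightarrow> nat \<Rightarrow> (nat \<Rightarrow> cmat) \<Rightarrow> (nat \<Rightarrow> cmat) \<Rightarrow> bool" where
  "bracket_pair d s A B \<longleftrightarrow>
     eq_on_square s (gram d s A A) id_mat \<and> eq_on_square s (gram d s B B) id_mat \<and>
     eq_on_square s (gram d s A B) (\<lambda>_ _. 0)"

lemma Brac_iff_bracket_pair:
  "(a, b) \<in> Brac d s \<longleftrightarrow> a \<in> simplex d \<and> b \<in> simplex d \<and>
     (\<exists>A B. bracket_pair d s A B \<and>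
        (\<forall>i<d. frob_sq s (A i) / real s = a i \<and> frob_sq s (B i) / real s = b i))"
  by (simp add: Brac_def bracket_pair_def eq_on_square_def gram_def id_mat_def)

lemma bracket_pair_block_diag:
  assumes "bracket_pair d s A B" and "bracket_pair d t C D"
  shows "bracket_pair d (s + t) (\<lambda>i. block_diag s (A i) (C i)) (\<lambda>i. block_diag s (B i) (D i))"
proof -
  have diag: "eq_on_square (s + t) (block_diag s X Y) M"
    if "eq_on_square s X M" and "eq_on_square t Y M" and "block_diag s M M = M" for X Y M
    using eq_on_square_block_diag [OF that(1,2)] that(3) by simp
  show ?thesis
    using assms unfolding bracket_pair_def gram_block_diag
    by (blast intro: diag block_diag_id_mat block_diag_zero)
qed

lemma simplex_weighted_mean:
  fixes x y :: real
  assumes "a \<in> simplex d" and "b \<in> simplex d" and "x \<ge> 0" and "y \<ge> 0" and "x + y > 0"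
  shows "(\<lambda>i. (x * a i + y * b i) / (x + y)) \<in> simplex d"
proof -
  have "(\<Sum>i<d. (x * a i + y * b i) / (x + y)) = (x * (\<Sum>i<d. a i) + y * (\<Sum>i<d. b i)) / (x + y)"
    by (simp add: sum_divide_distrib [symmetric] sum.distrib sum_distrib_left)
  also have "\<dots> = 1"
    using assms by (simp add: simplex_def)
  finally show ?thesis
    using assms by (auto simp: simplex_def)
qed

theorem proposition3p5:
  fixes d s t :: nat and \<alpha> \<beta> \<mu> \<nu> :: "nat \<Rightarrow> real"
  assumes "d \<ge> 2" and "s \<ge> 1" and "t \<ge> 1"
    and "(\<alpha>, \<beta>) \<in> Brac d s" and "(\<mu>, \<nu>) \<in> Brac d t"
  shows "((\<lambda>i. (real s * \<alpha> i + real t * \<mu> i) / real (s + t)),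
          (\<lambda>i. (real s * \<beta> i + real t * \<nu> i) / real (s + t))) \<in> Brac d (s + t)"
proof -
  obtain A B where AB: "bracket_pair d s A B"
    and frob_AB: "\<forall>i<d. frob_sq s (A i) = real s * \<alpha> i \<and> frob_sq s (B i) = real s * \<beta> i"
    using assms(2,4) by (auto simp: Brac_iff_bracket_pair field_simps)
  obtain C D where CD: "bracket_pair d t C D"
    and frob_CD: "\<forall>i<d. frob_sq t (C i) = real t * \<mu> i \<and> frob_sq t (D i) = real t * \<nu> i"
    using assms(3,5) by (auto simp: Brac_iff_bracket_pair field_simps)
  have "\<alpha> \<in> simplex d" "\<beta> \<in> simplex d" "\<mu> \<in> simplex d" "\<nu> \<in> simplex d"
    using assms(4,5) by (simp_all add: Brac_iff_bracket_pair)
  then have means: "(\<lambda>i. (real s * \<alpha> i + real t * \<mu> i) / real (s + t)) \<in> simplex d"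
    "(\<lambda>i. (real s * \<beta> i + real t * \<nu> i) / real (s + t)) \<in> simplex d"
    using assms(2) by (auto intro: simplex_weighted_mean)
  show ?thesis
    unfolding Brac_iff_bracket_pair
  proof (intro conjI exI)
    show "bracket_pair d (s + t) (\<lambda>i. block_diag s (A i) (C i)) (\<lambda>i. block_diag s (B i) (D i))"
      using AB CD by (rule bracket_pair_block_diag)
  qed (use means frob_AB frob_CD in \<open>auto simp: frob_sq_block_diag\<close>)
qed

end
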